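(* Let $S \subseteq \mathbb{R}^n$ be nonempty, closed and convex, and let $F_i = f_i + g_i$, $i=1,\dots,m$, where each $f_i \colon S \to \mathbb{R}$ is continuously differentiable and each $g_i \colon S \to \mathbb{R}$ is convex. For $\ell \ge 0$ and $x \in S$ define (with values in $\mathbb{R}\cup\{\infty\}$) \[ u_\ell(x) := \sup_{y \in S} \min_{i} \left\{F_i(x) - F_i(y) - \frac{\ell}{2}\|x-y\|^2\right\}, \qquad w_\ell(x) := \sup_{y \in S} \min_{i} \left\{ \nabla f_i(x)^\top (x - y) + g_i(x) - g_i(y) - \frac{\ell}{2}\|x - y\|^2 \right\}, \] the minima being over $i = 1,\dots,m$. Then: (i) If each $f_i$ is $\mu_i$-convex for some $\mu_i \in \mathbb{R}$ and $\mu := \min_i \mu_i$, then for all $\ell > 0$ and $x \in S$: if $\mu \ge 0$, $u_0(x) \le w_\mu(x)$ and $u_\ell(x) \le w_{\mu+\ell}(x)$; otherwise $u_{-\mu+\ell}(x) \le w_\ell(x)$. (ii) If each $\nabla f_i$ is $L_i$-Lipschitz continuous for some $L_i > 0$ and $L := \max_i L_i$, then for all $\ell > 0$ and $x \in S$: $u_{L+\ell}(x) \le w_\ell(x)$, $u_0(x) \ge w_L(x)$, and $u_\ell(x) \ge w_{L+\ell}(x)$.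
   Context: A function $h \colon S \to \mathbb{R}$ is $\sigma$-convex ($\sigma\in\mathbb{R}$) if $h(\alpha x + (1-\alpha)y) \le \alpha h(x) + (1-\alpha)h(y) - \frac{\alpha(1-\alpha)\sigma}{2}\|x-y\|^2$ for all $x,y \in S$, $\alpha \in [0,1]$. *)

theory Defs
  imports "HOL-Analysis.Analysis"
begin

definition sigma_convex_on :: "'a::real_normed_vector set \<Rightarrow> real \<Rightarrow> ('a \<Rightarrow> real) \<Rightarrow> bool" where
  "sigma_convex_on S \<sigma> h \<longleftrightarrow>
     (\<forall>x\<in>S. \<forall>y\<in>S. \<forall>\<alpha>::real. 0 \<le> \<alpha> \<and> \<alpha> \<le> 1 \<longrightarrow>
        h (\<alpha> *\<^sub>R x + (1 - \<alpha>) *\<^sub>R y)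
          \<le> \<alpha> * h x + (1 - \<alpha>) * h y - \<alpha> * (1 - \<alpha>) * \<sigma> / 2 * (norm (x - y))\<^sup>2)"

definition u_fun :: "'a::euclidean_space set \<Rightarrow> nat \<Rightarrow> (nat \<Rightarrow> 'a \<Rightarrow> real) \<Rightarrow> real \<Rightarrow> 'a \<Rightarrow> ereal" where
  "u_fun S m F l x =
     (SUP y\<in>S. ereal (Min ((\<lambda>i. F i x - F i y - l / 2 * (norm (x - y))\<^sup>2) ` {1..m})))"

definition w_fun :: "'a::euclidean_space set \<Rightarrow> nat \<Rightarrow> (nat \<Rightarrow> 'a \<Rightarrow> 'a) \<Rightarrow> (nat \<Rightarrow> 'a \<Rightarrow> real)
                      \<Rightarrow> real \<Rightarrow> 'a \<Rightarrow> ereal" where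
  "w_fun S m gf g l x =
     (SUP y\<in>S. ereal (Min ((\<lambda>i. gf i x \<bullet> (x - y) + g i x - g i y - l / 2 * (norm (x - y))\<^sup>2) ` {1..m})))"

end

theory Submission
  imports Defs
begin

text \<open>
  Both parts compare the two suprema term by term, for each y and i. A differentiable
  \<sigma>-convex function lies above its tangent plus \<sigma>/2 |y - x|^2, and a function whose
  gradient is L-Lipschitz deviates from its tangent by at most L/2 |y - x|^2 (the descent
  lemma, from comparing derivatives along the segment [x, y]). Trading these quadratic terms
  against the penalties l/2 |x - y|^2 gives all inequalities. The g_i cancel.
\<close>

lemma SUP_Min_mono:
  fixes A B :: "'i \<Rightarrow> 'b \<Rightarrow> real"
  assumes "finite I" and "\<And>y i. y \<in> Y \<Longrightarrow> i \<in> I \<Longrightarrow> A i y \<le> B i y"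
  shows "(SUP y\<in>Y. ereal (Min ((\<lambda>i. A i y) ` I))) \<le> (SUP y\<in>Y. ereal (Min ((\<lambda>i. B i y) ` I)))"
proof (cases "I = {}")
  case False
  then show ?thesis
    using assms by (intro SUP_subset_mono order.refl) (auto simp: Min_le_iff)
qed simp

lemma has_real_derivative_along_segment:
  fixes f :: "'a::real_normed_vector \<Rightarrow> real"
  assumes "convex S" "x \<in> S" "y \<in> S" "t \<in> {0..1}"
    and f': "(f has_derivative f') (at (x + t *\<^sub>R (y - x)) within S)"
  shows "((\<lambda>t. f (x + t *\<^sub>R (y - x))) has_real_derivative f' (y - x)) (at t within {0..1})"
proof -
  have segment: "(\<lambda>t. x + t *\<^sub>R (y - x)) ` {0..1} \<subseteq> S"
  proof clarify
    fix s :: real assume "s \<in> {0..1}"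
    then show "x + s *\<^sub>R (y - x) \<in> S"
      using convexD_alt[OF assms(1-3), of s] by (simp add: algebra_simps)
  qed
  have path: "((\<lambda>t. x + t *\<^sub>R (y - x)) has_derivative (\<lambda>s. s *\<^sub>R (y - x))) (at t within {0..1})"
    by (auto intro!: derivative_eq_intros)
  have "((\<lambda>t. f (x + t *\<^sub>R (y - x))) has_derivative (\<lambda>s. f' (s *\<^sub>R (y - x)))) (at t within {0..1})"
    using diff_chain_within[OF path has_derivative_subset[OF f' segment]] by (simp add: o_def)
  moreover have "f' (s *\<^sub>R (y - x)) = f' (y - x) * s" for s
    using linear_scale[OF has_derivative_linear[OF f']] by simp
  ultimately show ?thesis
    by (simp add: has_field_derivative_def)
qed

lemma sigma_convex_on_mono:
  assumes "sigma_convex_on S \<sigma> f" and "\<sigma>' \<le> \<sigma>"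
  shows "sigma_convex_on S \<sigma>' f"
  unfolding sigma_convex_on_def
proof (intro ballI allI impI)
  fix x y and \<alpha> :: real assume "x \<in> S" "y \<in> S" "0 \<le> \<alpha> \<and> \<alpha> \<le> 1"
  then have "\<alpha> * (1 - \<alpha>) * \<sigma>' / 2 * (norm (x - y))\<^sup>2 \<le> \<alpha> * (1 - \<alpha>) * \<sigma> / 2 * (norm (x - y))\<^sup>2"
    using \<open>\<sigma>' \<le> \<sigma>\<close> by (intro mult_right_mono divide_right_mono mult_left_mono) auto
  with assms(1) \<open>x \<in> S\<close> \<open>y \<in> S\<close> \<open>0 \<le> \<alpha> \<and> \<alpha> \<le> 1\<close>
  show "f (\<alpha> *\<^sub>R x + (1 - \<alpha>) *\<^sub>R y)
          \<le> \<alpha> * f x + (1 - \<alpha>) * f y - \<alpha> * (1 - \<alpha>) * \<sigma>' / 2 * (norm (x - y))\<^sup>2"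
    unfolding sigma_convex_on_def by fastforce
qed

lemma sigma_convex_on_imp_above_tangent:
  fixes f :: "'a::real_normed_vector \<Rightarrow> real"
  assumes sc: "sigma_convex_on S \<sigma> f" and "convex S" "x \<in> S" "y \<in> S"
    and f': "(f has_derivative f') (at x within S)"
  shows "f' (y - x) + \<sigma> / 2 * (norm (y - x))\<^sup>2 \<le> f y - f x"
proof -
  define \<phi> where "\<phi> t = f (x + t *\<^sub>R (y - x))" for t
  define D where "D = (norm (y - x))\<^sup>2"
  have "(\<phi> has_real_derivative f' (y - x)) (at 0 within {0..1})"
    using has_real_derivative_along_segment[OF assms(2-4), of 0] f' unfolding \<phi>_def by simp
  then have slope: "((\<lambda>t. (\<phi> t - \<phi> 0) / t) \<longlongrightarrow> f' (y - x)) (at_right 0)"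
    by (simp add: has_field_derivative_iff at_within_Icc_at_right)
  have chord: "\<forall>\<^sub>F t in at_right 0. (\<phi> t - \<phi> 0) / t \<le> f y - f x - (1 - t) * \<sigma> / 2 * D"
    using eventually_at_right_real[OF zero_less_one]
  proof eventually_elim
    case (elim t)
    have "f (t *\<^sub>R y + (1 - t) *\<^sub>R x) \<le> t * f y + (1 - t) * f x - t * (1 - t) * \<sigma> / 2 * D"
      using sc \<open>x \<in> S\<close> \<open>y \<in> S\<close> elim unfolding sigma_convex_on_def D_def by auto
    moreover have "t *\<^sub>R y + (1 - t) *\<^sub>R x = x + t *\<^sub>R (y - x)"
      by (simp add: algebra_simps)
    ultimately have "\<phi> t - \<phi> 0 \<le> t * (f y - f x - (1 - t) * \<sigma> / 2 * D)"
      unfolding \<phi>_def by (simp add: algebra_simps)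
    then show ?case
      using elim by (simp add: divide_le_eq mult.commute)
  qed
  have "((\<lambda>t. f y - f x - (1 - t) * \<sigma> / 2 * D) \<longlongrightarrow> f y - f x - (1 - 0) * \<sigma> / 2 * D) (at_right 0)"
    by (intro tendsto_intros) simp
  from tendsto_le[OF trivial_limit_at_right_real this slope chord]
  show ?thesis
    unfolding D_def by simp
qed

lemma remainder_le_of_derivative_growth:
  fixes \<phi> :: "real \<Rightarrow> real"
  assumes \<phi>': "\<And>t. t \<in> {0..1} \<Longrightarrow> (\<phi> has_real_derivative \<phi>' t) (at t within {0..1})"
    and growth: "\<And>t. t \<in> {0..1} \<Longrightarrow> \<phi>' t - \<phi>' 0 \<le> K * t"
  shows "\<phi> 1 - \<phi> 0 - \<phi>' 0 \<le> K / 2"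
proof -
  define \<psi> where "\<psi> t = \<phi> t - t * \<phi>' 0 - K / 2 * t\<^sup>2" for t
  have \<psi>': "(\<psi> has_real_derivative \<phi>' t - \<phi>' 0 - K * t) (at t within {0..1})"
    if "t \<in> {0..1}" for t
    unfolding \<psi>_def by (rule derivative_eq_intros \<phi>'[OF that] refl | simp)+
  have "\<psi> 1 \<le> \<psi> 0"
  proof (rule DERIV_nonpos_imp_decreasing_open[of 0 1 \<psi>])
    fix t :: real assume "0 < t" "t < 1"
    then show "\<exists>d. (\<psi> has_real_derivative d) (at t) \<and> d \<le> 0"
      using \<psi>'[of t] growth[of t] by (auto simp: at_within_Icc_at)
  next
    show "continuous_on {0..1} \<psi>"
      using \<psi>' by (rule DERIV_continuous_on)
  qed simp
  then show ?thesis
    unfolding \<psi>_def by simp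
qed

lemma lipschitz_gradient_imp_remainder_bound:
  fixes f :: "'a::real_inner \<Rightarrow> real"
  assumes lip: "lipschitz_on L S G" and "convex S" "x \<in> S" "y \<in> S"
    and G: "\<And>z. z \<in> S \<Longrightarrow> (f has_derivative (\<lambda>h. G z \<bullet> h)) (at z within S)"
  shows "\<bar>f y - f x - G x \<bullet> (y - x)\<bar> \<le> L / 2 * (norm (y - x))\<^sup>2"
proof -
  define v where "v = y - x"
  define \<phi> where "\<phi> t = f (x + t *\<^sub>R v)" for t
  define \<phi>' where "\<phi>' t = G (x + t *\<^sub>R v) \<bullet> v" for t
  have segment: "x + t *\<^sub>R v \<in> S" if "t \<in> {0..1}" for t
    using convexD_alt[OF assms(2-4), of t] that unfolding v_def by (simp add: algebra_simps)
  have \<phi>_deriv: "(\<phi> has_real_derivative \<phi>' t) (at t within {0..1})" if "t \<in> {0..1}" for t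
    using has_real_derivative_along_segment[OF assms(2-4) that G[OF segment[OF that, unfolded v_def]]]
    unfolding \<phi>_def \<phi>'_def v_def .
  have growth: "\<bar>\<phi>' t - \<phi>' 0\<bar> \<le> L * (norm v)\<^sup>2 * t" if t: "t \<in> {0..1}" for t
  proof -
    have "\<bar>\<phi>' t - \<phi>' 0\<bar> = \<bar>(G (x + t *\<^sub>R v) - G x) \<bullet> v\<bar>"
      unfolding \<phi>'_def by (simp add: inner_diff_left)
    also have "\<dots> \<le> norm (G (x + t *\<^sub>R v) - G x) * norm v"
      by (rule Cauchy_Schwarz_ineq2)
    also have "\<dots> \<le> L * dist (x + t *\<^sub>R v) x * norm v"
      using lipschitz_onD[OF lip segment[OF t] \<open>x \<in> S\<close>] by (intro mult_right_mono) (auto simp: dist_norm)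
    also have "\<dots> = L * (norm v)\<^sup>2 * t"
      using t by (simp add: dist_norm power2_eq_square)
    finally show ?thesis .
  qed
  have "\<phi> 1 - \<phi> 0 - \<phi>' 0 \<le> L * (norm v)\<^sup>2 / 2"
    using \<phi>_deriv growth by (intro remainder_le_of_derivative_growth) (auto simp: abs_le_iff)
  moreover have "- \<phi> 1 - - \<phi> 0 - - \<phi>' 0 \<le> L * (norm v)\<^sup>2 / 2"
    using DERIV_minus[OF \<phi>_deriv] growth
    by (intro remainder_le_of_derivative_growth[of "\<lambda>t. - \<phi> t" "\<lambda>t. - \<phi>' t"]) (auto simp: abs_le_iff)
  ultimately show ?thesis
    unfolding \<phi>_def \<phi>'_def v_def by (simp split: abs_split)
qed

lemma u_fun_le_w_fun_if_sigma_convex: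
  fixes f g :: "nat \<Rightarrow> 'a::euclidean_space \<Rightarrow> real" and gf :: "nat \<Rightarrow> 'a \<Rightarrow> 'a"
  assumes "convex S" "x \<in> S"
    and deriv: "\<And>i. i \<in> {1..m} \<Longrightarrow> (f i has_derivative (\<lambda>h. gf i x \<bullet> h)) (at x within S)"
    and sc: "\<And>i. i \<in> {1..m} \<Longrightarrow> sigma_convex_on S \<mu> (f i)"
    and "l' \<le> \<mu> + l"
  shows "u_fun S m (\<lambda>i z. f i z + g i z) l x \<le> w_fun S m gf g l' x"
  unfolding u_fun_def w_fun_def
proof (rule SUP_Min_mono)
  fix y i assume "y \<in> S" and i: "i \<in> {1..m}"
  have "gf i x \<bullet> (y - x) + \<mu> / 2 * (norm (y - x))\<^sup>2 \<le> f i y - f i x"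
    by (rule sigma_convex_on_imp_above_tangent[OF sc[OF i] assms(1,2) \<open>y \<in> S\<close> deriv[OF i]])
  moreover have "l' / 2 * (norm (x - y))\<^sup>2 \<le> (\<mu> + l) / 2 * (norm (x - y))\<^sup>2"
    using \<open>l' \<le> \<mu> + l\<close> by (intro mult_right_mono) auto
  ultimately show "f i x + g i x - (f i y + g i y) - l / 2 * (norm (x - y))\<^sup>2
      \<le> gf i x \<bullet> (x - y) + g i x - g i y - l' / 2 * (norm (x - y))\<^sup>2"
    by (simp add: norm_minus_commute inner_diff_right field_simps)
qed simp

lemma u_fun_w_fun_comparison_if_lipschitz_gradient:
  fixes f g :: "nat \<Rightarrow> 'a::euclidean_space \<Rightarrow> real" and gf :: "nat \<Rightarrow> 'a \<Rightarrow> 'a"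
  assumes "convex S" "x \<in> S"
    and deriv: "\<And>i z. i \<in> {1..m} \<Longrightarrow> z \<in> S \<Longrightarrow> (f i has_derivative (\<lambda>h. gf i z \<bullet> h)) (at z within S)"
    and lip: "\<And>i. i \<in> {1..m} \<Longrightarrow> lipschitz_on L S (gf i)"
  shows "L + l' \<le> l \<Longrightarrow> u_fun S m (\<lambda>i z. f i z + g i z) l x \<le> w_fun S m gf g l' x"
    and "L + l \<le> l' \<Longrightarrow> w_fun S m gf g l' x \<le> u_fun S m (\<lambda>i z. f i z + g i z) l x"
proof -
  have remainder: "\<bar>f i x - f i y - gf i x \<bullet> (x - y)\<bar> \<le> L / 2 * (norm (x - y))\<^sup>2"
    if "y \<in> S" "i \<in> {1..m}" for y i
  proof -
    have "f i x - f i y - gf i x \<bullet> (x - y) = - (f i y - f i x - gf i x \<bullet> (y - x))"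
      by (simp add: inner_diff_right)
    with lipschitz_gradient_imp_remainder_bound[OF lip[OF \<open>i \<in> {1..m}\<close>] assms(1,2) \<open>y \<in> S\<close>
        deriv[OF \<open>i \<in> {1..m}\<close>]]
    show ?thesis
      by (metis abs_minus_cancel norm_minus_commute)
  qed
  have penalty: "a / 2 * (norm (x - y))\<^sup>2 \<le> b / 2 * (norm (x - y))\<^sup>2" if "a \<le> b" for a b y
    using that by (intro mult_right_mono) auto
  show "u_fun S m (\<lambda>i z. f i z + g i z) l x \<le> w_fun S m gf g l' x" if "L + l' \<le> l"
    unfolding u_fun_def w_fun_def
  proof (rule SUP_Min_mono)
    fix y i assume "y \<in> S" "i \<in> {1..m}"
    with remainder penalty[OF that, of y]
    show "f i x + g i x - (f i y + g i y) - l / 2 * (norm (x - y))\<^sup>2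
        \<le> gf i x \<bullet> (x - y) + g i x - g i y - l' / 2 * (norm (x - y))\<^sup>2"
      unfolding abs_le_iff add_divide_distrib distrib_right by fastforce
  qed simp
  show "w_fun S m gf g l' x \<le> u_fun S m (\<lambda>i z. f i z + g i z) l x" if "L + l \<le> l'"
    unfolding u_fun_def w_fun_def
  proof (rule SUP_Min_mono)
    fix y i assume "y \<in> S" "i \<in> {1..m}"
    with remainder penalty[OF that, of y]
    show "gf i x \<bullet> (x - y) + g i x - g i y - l' / 2 * (norm (x - y))\<^sup>2
        \<le> f i x + g i x - (f i y + g i y) - l / 2 * (norm (x - y))\<^sup>2"
      unfolding abs_le_iff add_divide_distrib distrib_right by fastforce
  qed simp
qed

theorem theorem4p1:
  fixes S :: "'a::euclidean_space set"
    and m :: nat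
    and f g :: "nat \<Rightarrow> 'a \<Rightarrow> real"
    and gf :: "nat \<Rightarrow> 'a \<Rightarrow> 'a"
    and mu Lc :: "nat \<Rightarrow> real"
  assumes "S \<noteq> {}" and "closed S" and "convex S"
    and "m \<ge> 1"
    and deriv: "\<And>i x. i \<in> {1..m} \<Longrightarrow> x \<in> S \<Longrightarrow>
                  (f i has_derivative (\<lambda>h. gf i x \<bullet> h)) (at x within S)"
    and cont: "\<And>i. i \<in> {1..m} \<Longrightarrow> continuous_on S (gf i)"
    and gconv: "\<And>i. i \<in> {1..m} \<Longrightarrow> convex_on S (g i)"
  shows
    "((\<forall>i\<in>{1..m}. sigma_convex_on S (mu i) (f i)) \<longrightarrow>
       (\<forall>l>0. \<forall>x\<in>S.
          (let \<mu> = Min (mu ` {1..m}) in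
            if \<mu> \<ge> 0 then
              u_fun S m (\<lambda>i z. f i z + g i z) 0 x \<le> w_fun S m gf g \<mu> x \<and>
              u_fun S m (\<lambda>i z. f i z + g i z) l x \<le> w_fun S m gf g (\<mu> + l) x
            else
              u_fun S m (\<lambda>i z. f i z + g i z) (- \<mu> + l) x \<le> w_fun S m gf g l x)))
     \<and>
     ((\<forall>i\<in>{1..m}. Lc i > 0 \<and> lipschitz_on (Lc i) S (gf i)) \<longrightarrow>
       (\<forall>l>0. \<forall>x\<in>S.
          (let L = Max (Lc ` {1..m}) in
            u_fun S m (\<lambda>i z. f i z + g i z) (L + l) x \<le> w_fun S m gf g l x \<and>
            u_fun S m (\<lambda>i z. f i z + g i z) 0 x \<ge> w_fun S m gf g L x \<and>
            u_fun S m (\<lambda>i z. f i z + g i z) l x \<ge> w_fun S m gf g (L + l) x)))"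
proof -
  define \<mu> where "\<mu> = Min (mu ` {1..m})"
  define L where "L = Max (Lc ` {1..m})"
  have "finite {1..m}" "{1..m} \<noteq> {}"
    using \<open>m \<ge> 1\<close> by auto
  then have \<mu>_le: "\<mu> \<le> mu i" and L_ge: "Lc i \<le> L" if "i \<in> {1..m}" for i
    using that unfolding \<mu>_def L_def by auto
  have "sigma_convex_on S \<mu> (f i)"
    if "\<forall>i\<in>{1..m}. sigma_convex_on S (mu i) (f i)" "i \<in> {1..m}" for i
    using that by (intro sigma_convex_on_mono[OF _ \<mu>_le]) auto
  note sigma_bound = u_fun_le_w_fun_if_sigma_convex[OF \<open>convex S\<close> _ deriv this]
  have "lipschitz_on L S (gf i)"
    if "\<forall>i\<in>{1..m}. Lc i > 0 \<and> lipschitz_on (Lc i) S (gf i)" "i \<in> {1..m}" for i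
    using that by (intro lipschitz_on_mono[OF _ order_refl L_ge]) auto
  note lipschitz_bounds = u_fun_w_fun_comparison_if_lipschitz_gradient[OF \<open>convex S\<close> _ deriv this]
  show ?thesis
    unfolding Let_def \<mu>_def[symmetric] L_def[symmetric]
    by (auto intro: sigma_bound lipschitz_bounds)
qed

end
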